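(* Let $p\colon X\to B$ be a Boolean set. Let $X^{\ast}$ be the set of ultrafilters of $(X,\le)$, topologized by the basis of sets $L(a)=\{G\in X^{\ast}: a\in G\}$, $a\in X$, and let $B^{\ast}$ be the set of ultrafilters of $B$ with the Stone topology (basis $M(b)=\{F\in B^{\ast}: b\in F\}$, $b\in B$). Let $\widetilde p\colon X^{\ast}\to B^{\ast}$ be $G\mapsto p(G)$ (which is an ultrafilter of $B$). Then $\widetilde p\colon X^{\ast}\to B^{\ast}$ is an étalé space, i.e. $\widetilde p$ is a surjective local homeomorphism (and $B^{\ast}$ is a Boolean space).
   Context: Convention: a "Boolean algebra" means a generalized Boolean algebra (relatively complemented distributive lattice with $0$). Presheaf of sets over a meet semilattice $E$: pairwise disjoint sets $X_e$, restriction maps $x\mapsto x|^e_f$ for $e\ge f$ with $|^e_e=\mathrm{id}$ and $(x|^e_f)|^f_g=x|^e_g$; $p(x)=e$ iff $x\in X_e$; global support: all $X_e\neq\emptyset$. Order: $x\le y$ iff $p(x)\le p(y)$ and $x=y|^{p(y)}_{p(x)}$. Compatibility $x\sim y$: $x\wedge y$ exists and $p(x\wedge y)=p(x)\wedge p(y)$. A Boolean set is a presheaf $p\colon X\to B$ with global support over a Boolean algebra $B$ such that $(X,\le)$ has least element $0$, compatible pairs have joins, and $p(x)=0\Rightarrow x=0$. Filter: non-empty, down directed, upwardly closed subset; ultrafilter: maximal proper filter. An étalé space is a triple $(E,p,Y)$ with $p\colon E\to Y$ a surjective local homeomorphism; a Boolean space is a Hausdorff space with a basis of compact-open sets. *)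

theory Defs
  imports "HOL-Analysis.Analysis"
begin

definition gen_boolean_algebra :: "'b::{distrib_lattice,order_bot} itself \<Rightarrow> bool" where
  "gen_boolean_algebra _ \<longleftrightarrow>
     (\<forall>a b :: 'b. a \<le> b \<longrightarrow> (\<exists>c. inf a c = bot \<and> sup a c = b))"

text \<open>Presheaf of sets over the meet semilattice 'b: total space the type 'x, projection p,
  restriction r x f = x|^{p x}_f (only meaningful for f \<le> p x).\<close>
definition presheaf :: "('x \<Rightarrow> 'b::semilattice_inf) \<Rightarrow> ('x \<Rightarrow> 'b \<Rightarrow> 'x) \<Rightarrow> bool" where
  "presheaf p r \<longleftrightarrow>
     (\<forall>x f. f \<le> p x \<longrightarrow> p (r x f) = f) \<and>
     (\<forall>x. r x (p x) = x) \<and>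
     (\<forall>x f g. g \<le> f \<longrightarrow> f \<le> p x \<longrightarrow> r (r x f) g = r x g)"

definition global_support :: "('x \<Rightarrow> 'b) \<Rightarrow> bool" where
  "global_support p \<longleftrightarrow> (\<forall>e. \<exists>x. p x = e)"

definition pre_le :: "('x \<Rightarrow> 'b::order) \<Rightarrow> ('x \<Rightarrow> 'b \<Rightarrow> 'x) \<Rightarrow> 'x \<Rightarrow> 'x \<Rightarrow> bool" where
  "pre_le p r x y \<longleftrightarrow> p x \<le> p y \<and> x = r y (p x)"

definition is_meet_of :: "('a \<Rightarrow> 'a \<Rightarrow> bool) \<Rightarrow> 'a \<Rightarrow> 'a \<Rightarrow> 'a \<Rightarrow> bool" where
  "is_meet_of le x y z \<longleftrightarrow> le z x \<and> le z y \<and> (\<forall>w. le w x \<and> le w y \<longrightarrow> le w z)"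

definition is_join_of :: "('a \<Rightarrow> 'a \<Rightarrow> bool) \<Rightarrow> 'a \<Rightarrow> 'a \<Rightarrow> 'a \<Rightarrow> bool" where
  "is_join_of le x y z \<longleftrightarrow> le x z \<and> le y z \<and> (\<forall>w. le x w \<and> le y w \<longrightarrow> le z w)"

definition compatible :: "('x \<Rightarrow> 'b::semilattice_inf) \<Rightarrow> ('x \<Rightarrow> 'b \<Rightarrow> 'x) \<Rightarrow> 'x \<Rightarrow> 'x \<Rightarrow> bool" where
  "compatible p r x y \<longleftrightarrow> (\<exists>z. is_meet_of (pre_le p r) x y z \<and> p z = inf (p x) (p y))"

definition is_least :: "('a \<Rightarrow> 'a \<Rightarrow> bool) \<Rightarrow> 'a \<Rightarrow> bool" where
  "is_least le z \<longleftrightarrow> (\<forall>x. le z x)"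

definition boolean_set ::
  "('x \<Rightarrow> 'b::{distrib_lattice,order_bot}) \<Rightarrow> ('x \<Rightarrow> 'b \<Rightarrow> 'x) \<Rightarrow> bool" where
  "boolean_set p r \<longleftrightarrow>
     gen_boolean_algebra TYPE('b) \<and> presheaf p r \<and> global_support p \<and>
     (\<exists>z. is_least (pre_le p r) z) \<and>
     (\<forall>x y. compatible p r x y \<longrightarrow> (\<exists>j. is_join_of (pre_le p r) x y j)) \<and>
     (\<forall>x. p x = bot \<longrightarrow> is_least (pre_le p r) x)"

definition is_filter :: "('a \<Rightarrow> 'a \<Rightarrow> bool) \<Rightarrow> 'a set \<Rightarrow> bool" where
  "is_filter le F \<longleftrightarrow> F \<noteq> {} \<and>
     (\<forall>a\<in>F. \<forall>b\<in>F. \<exists>c\<in>F. le c a \<and> le c b) \<and>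
     (\<forall>a\<in>F. \<forall>b. le a b \<longrightarrow> b \<in> F)"

definition is_ultrafilter :: "('a \<Rightarrow> 'a \<Rightarrow> bool) \<Rightarrow> 'a set \<Rightarrow> bool" where
  "is_ultrafilter le F \<longleftrightarrow> is_filter le F \<and> F \<noteq> UNIV \<and>
     (\<forall>G. is_filter le G \<and> G \<noteq> UNIV \<and> F \<subseteq> G \<longrightarrow> G = F)"

definition ultrafilter_space :: "('a \<Rightarrow> 'a \<Rightarrow> bool) \<Rightarrow> 'a set topology" where
  "ultrafilter_space le =
     topology_generated_by {{G. is_ultrafilter le G \<and> a \<in> G} | a. True}"

definition local_homeomorphism :: "'a topology \<Rightarrow> 'b topology \<Rightarrow> ('a \<Rightarrow> 'b) \<Rightarrow> bool" where
  "local_homeomorphism X Y f \<longleftrightarrow> continuous_map X Y f \<and>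
     (\<forall>x\<in>topspace X. \<exists>U. openin X U \<and> x \<in> U \<and> openin Y (f ` U) \<and>
        homeomorphic_map (subtopology X U) (subtopology Y (f ` U)) f)"

definition etale_space :: "'a topology \<Rightarrow> ('a \<Rightarrow> 'b) \<Rightarrow> 'b topology \<Rightarrow> bool" where
  "etale_space E p Y \<longleftrightarrow> p ` topspace E = topspace Y \<and> local_homeomorphism E Y p"

definition boolean_space :: "'a topology \<Rightarrow> bool" where
  "boolean_space X \<longleftrightarrow> Hausdorff_space X \<and>
     (\<forall>U x. openin X U \<and> x \<in> U \<longrightarrow>
        (\<exists>K. openin X K \<and> compactin X K \<and> x \<in> K \<and> K \<subseteq> U))"

end

theory Submission
  imports Defs
begin

text \<open>An ultrafilter G of X is determined by any x \<in> G together with its image p(G): it is the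
  upward closure of the restrictions x|f, f \<in> p(G), f \<le> p(x).  Conversely this construction
  lifts every ultrafilter of B containing p(x) to an ultrafilter of X containing x; existence of
  joins of compatible elements and relative complements in B make p(G) upward closed.  Hence
  G \<mapsto> p(G) maps the basic open set L(x) bijectively onto M(p(x)), which makes it a continuous,
  open, locally injective surjection, i.e. a local homeomorphism.  That B* is a Boolean space is
  Stone duality for generalized Boolean algebras: M(b) is compact because an ideal not containing
  b is avoided by some ultrafilter containing b.\<close>

section \<open>Ultrafilter spaces of relations\<close>

definition ultrafilters_containing :: "('a \<Rightarrow> 'a \<Rightarrow> bool) \<Rightarrow> 'a \<Rightarrow> 'a set set" where
  "ultrafilters_containing R a = {G. is_ultrafilter R G \<and> a \<in> G}"

lemma ultrafilter_imp_filter: "is_ultrafilter R G \<Longrightarrow> is_filter R G"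
  by (simp add: is_ultrafilter_def)

lemma filter_upclosed: "is_filter R F \<Longrightarrow> a \<in> F \<Longrightarrow> R a b \<Longrightarrow> b \<in> F"
  unfolding is_filter_def by blast

lemma filter_directed: "is_filter R F \<Longrightarrow> a \<in> F \<Longrightarrow> b \<in> F \<Longrightarrow> \<exists>c\<in>F. R c a \<and> R c b"
  unfolding is_filter_def by blast

lemma filter_nonempty: "is_filter R F \<Longrightarrow> \<exists>a. a \<in> F"
  unfolding is_filter_def by auto

lemma ultrafilters_containing_mono:
  "R c a \<Longrightarrow> ultrafilters_containing R c \<subseteq> ultrafilters_containing R a"
  unfolding ultrafilters_containing_def by (auto intro: filter_upclosed ultrafilter_imp_filter)

lemma ultrafilter_space_generated_by:
  "ultrafilter_space R = topology_generated_by (range (ultrafilters_containing R))"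
  unfolding ultrafilter_space_def ultrafilters_containing_def by (simp add: full_SetCompr_eq)

lemma openin_ultrafilters_containing:
  "openin (ultrafilter_space R) (ultrafilters_containing R a)"
  unfolding ultrafilter_space_generated_by openin_topology_generated_by_iff
  by (rule generate_topology_on.Basis) simp

lemma openin_ultrafilter_space_iff:
  "openin (ultrafilter_space R) U \<longleftrightarrow>
     (\<forall>G\<in>U. \<exists>a. G \<in> ultrafilters_containing R a \<and> ultrafilters_containing R a \<subseteq> U)"
  (is "_ \<longleftrightarrow> ?nbhds U")
proof
  assume "openin (ultrafilter_space R) U"
  then have "generate_topology_on (range (ultrafilters_containing R)) U"
    unfolding ultrafilter_space_generated_by by (rule openin_topology_generated_by)
  then show "?nbhds U"
  proof induction
    case (Int U V)
    show ?case
    proof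
      fix G assume G: "G \<in> U \<inter> V"
      obtain a where a: "G \<in> ultrafilters_containing R a" "ultrafilters_containing R a \<subseteq> U"
        using Int.IH(1) G by blast
      obtain b where b: "G \<in> ultrafilters_containing R b" "ultrafilters_containing R b \<subseteq> V"
        using Int.IH(2) G by blast
      have "is_filter R G" "a \<in> G" "b \<in> G"
        using a(1) b(1) unfolding ultrafilters_containing_def by (simp_all add: ultrafilter_imp_filter)
      then obtain c where c: "c \<in> G" "R c a" "R c b"
        by (rule filter_directed[THEN bexE]) blast
      have "G \<in> ultrafilters_containing R c"
        using a(1) c(1) by (simp add: ultrafilters_containing_def)
      moreover have "ultrafilters_containing R c \<subseteq> U \<inter> V"
        using ultrafilters_containing_mono[of R c a, OF c(2)]
          ultrafilters_containing_mono[of R c b, OF c(3)] a(2) b(2)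
        by blast
      ultimately show "\<exists>c. G \<in> ultrafilters_containing R c \<and> ultrafilters_containing R c \<subseteq> U \<inter> V"
        by blast
    qed
  next
    case (UN K)
    then show ?case by blast
  next
    case (Basis s)
    then show ?case by blast
  qed simp
next
  assume "?nbhds U"
  then have "U = \<Union>{ultrafilters_containing R a | a. ultrafilters_containing R a \<subseteq> U}"
    by blast
  moreover have "openin (ultrafilter_space R)
      (\<Union>{ultrafilters_containing R a | a. ultrafilters_containing R a \<subseteq> U})"
    by (rule openin_Union) (auto simp: openin_ultrafilters_containing)
  ultimately show "openin (ultrafilter_space R) U"
    by simp
qed

lemma topspace_ultrafilter_space:
  "topspace (ultrafilter_space R) = {G. is_ultrafilter R G}"
proof -
  have "\<exists>a. a \<in> G" if "is_ultrafilter R G" for G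
    using filter_nonempty[OF ultrafilter_imp_filter[OF that]] .
  then show ?thesis
    unfolding ultrafilter_space_generated_by ultrafilters_containing_def by auto
qed

lemma chain_Union_is_filter:
  assumes "\<C> \<noteq> {}" "subset.chain {F. is_filter R F} \<C>"
  shows "is_filter R (\<Union>\<C>)"
  unfolding is_filter_def
proof (intro conjI ballI allI impI)
  obtain C where "C \<in> \<C>" "is_filter R C"
    using assms by (auto simp: subset_chain_def)
  then show "\<Union>\<C> \<noteq> {}"
    using filter_nonempty by blast
next
  fix a b assume "a \<in> \<Union>\<C>" "b \<in> \<Union>\<C>"
  then obtain A B where "A \<in> \<C>" "a \<in> A" "B \<in> \<C>" "b \<in> B" by blast
  moreover have "A \<subseteq> B \<or> B \<subseteq> A" "is_filter R A" "is_filter R B"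
    using assms(2) \<open>A \<in> \<C>\<close> \<open>B \<in> \<C>\<close> unfolding subset_chain_def by auto
  ultimately obtain C where "C \<in> \<C>" "is_filter R C" "a \<in> C" "b \<in> C"
    by blast
  then show "\<exists>c\<in>\<Union>\<C>. R c a \<and> R c b"
    using filter_directed[of R C a b] by blast
next
  fix a b assume "a \<in> \<Union>\<C>" "R a b"
  then obtain C where "C \<in> \<C>" "a \<in> C"
    by blast
  moreover have "is_filter R C"
    using assms(2) \<open>C \<in> \<C>\<close> by (auto simp: subset_chain_def)
  ultimately show "b \<in> \<Union>\<C>"
    using filter_upclosed[of R C a b] \<open>R a b\<close> by blast
qed

definition maximal_filter_avoiding :: "('a \<Rightarrow> 'a \<Rightarrow> bool) \<Rightarrow> 'a set \<Rightarrow> 'a set \<Rightarrow> bool" where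
  "maximal_filter_avoiding R D M \<longleftrightarrow> is_filter R M \<and> M \<inter> D = {} \<and>
     (\<forall>X. is_filter R X \<and> X \<inter> D = {} \<and> M \<subseteq> X \<longrightarrow> X = M)"

lemma maximal_filter_avoiding_exists:
  assumes "is_filter R F" "F \<inter> D = {}"
  obtains M where "F \<subseteq> M" "maximal_filter_avoiding R D M"
proof -
  let ?\<A> = "{X. is_filter R X \<and> F \<subseteq> X \<and> X \<inter> D = {}}"
  have "\<exists>M\<in>?\<A>. \<forall>X\<in>?\<A>. M \<subseteq> X \<longrightarrow> X = M"
  proof (rule subset_Zorn_nonempty)
    show "?\<A> \<noteq> {}"
      using assms by blast
  next
    fix \<C> assume "\<C> \<noteq> {}" "subset.chain ?\<A> \<C>"
    moreover from this have "subset.chain {X. is_filter R X} \<C>"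
      by (auto simp: subset_chain_def)
    ultimately show "\<Union>\<C> \<in> ?\<A>"
      using chain_Union_is_filter[of \<C> R] by (auto simp: subset_chain_def)
  qed
  then obtain M where M: "M \<in> ?\<A>" and maximal: "\<forall>X\<in>?\<A>. M \<subseteq> X \<longrightarrow> X = M"
    by blast
  have "maximal_filter_avoiding R D M"
    unfolding maximal_filter_avoiding_def
  proof (intro conjI allI impI)
    show "is_filter R M" "M \<inter> D = {}"
      using M by blast+
    fix X assume "is_filter R X \<and> X \<inter> D = {} \<and> M \<subseteq> X"
    with M maximal show "X = M"
      by blast
  qed
  moreover have "F \<subseteq> M"
    using M by blast
  ultimately show thesis
    using that by blast
qed

section \<open>Ultrafilters of lattices and the Stone space\<close>

lemma filter_inf_closed:
  fixes F :: "'a::lattice set"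
  assumes "is_filter (\<le>) F" "a \<in> F" "b \<in> F"
  shows "inf a b \<in> F"
proof -
  obtain c where "c \<in> F" "c \<le> a" "c \<le> b"
    using filter_directed[OF assms] by blast
  then show ?thesis
    using filter_upclosed[OF assms(1) \<open>c \<in> F\<close>, of "inf a b"] by simp
qed

lemma filter_eq_UNIV_iff_bot:
  fixes F :: "'a::order_bot set"
  assumes "is_filter (\<le>) F"
  shows "F = UNIV \<longleftrightarrow> bot \<in> F"
  using filter_upclosed[OF assms, of bot] by auto

lemma ultrafilter_iff_maximal_bot_free:
  fixes F :: "'a::order_bot set"
  shows "is_ultrafilter (\<le>) F \<longleftrightarrow> is_filter (\<le>) F \<and> bot \<notin> F \<and>
     (\<forall>F'. is_filter (\<le>) F' \<and> bot \<notin> F' \<and> F \<subseteq> F' \<longrightarrow> F' = F)"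
  unfolding is_ultrafilter_def by (metis filter_eq_UNIV_iff_bot)

lemma ultrafilter_iff_maximal_filter_avoiding_bot:
  "is_ultrafilter (\<le>) F \<longleftrightarrow> maximal_filter_avoiding (\<le>) {bot :: 'a::order_bot} F"
  unfolding ultrafilter_iff_maximal_bot_free maximal_filter_avoiding_def by blast

definition is_ideal :: "'a::{lattice,order_bot} set \<Rightarrow> bool" where
  "is_ideal D \<longleftrightarrow>
     bot \<in> D \<and> (\<forall>d\<in>D. \<forall>d'. d' \<le> d \<longrightarrow> d' \<in> D) \<and> (\<forall>d\<in>D. \<forall>e\<in>D. sup d e \<in> D)"

lemma is_ideal_bot: "is_ideal {bot :: 'a::{lattice,order_bot}}"
  unfolding is_ideal_def by (simp add: bot_unique)

definition adjoin_filter :: "'a::lattice \<Rightarrow> 'a set \<Rightarrow> 'a set" where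
  "adjoin_filter a F = {y. \<exists>f\<in>F. inf a f \<le> y}"

lemma
  fixes F :: "'a::lattice set"
  assumes F: "is_filter (\<le>) F"
  shows is_filter_adjoin_filter: "is_filter (\<le>) (adjoin_filter a F)"
    and subset_adjoin_filter: "F \<subseteq> adjoin_filter a F"
    and mem_adjoin_filter: "a \<in> adjoin_filter a F"
proof -
  obtain f0 where f0: "f0 \<in> F"
    using filter_nonempty[OF F] by blast
  then show "a \<in> adjoin_filter a F"
    unfolding adjoin_filter_def by auto
  show "F \<subseteq> adjoin_filter a F"
    unfolding adjoin_filter_def by (auto intro: le_infI2)
  show "is_filter (\<le>) (adjoin_filter a F)"
    unfolding is_filter_def
  proof (intro conjI ballI allI impI)
    show "adjoin_filter a F \<noteq> {}"
      unfolding adjoin_filter_def using f0 by auto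
  next
    fix x y assume "x \<in> adjoin_filter a F" "y \<in> adjoin_filter a F"
    then obtain f g where "f \<in> F" "inf a f \<le> x" "g \<in> F" "inf a g \<le> y"
      unfolding adjoin_filter_def by blast
    moreover from this have "inf a (inf f g) \<in> adjoin_filter a F"
      unfolding adjoin_filter_def using filter_inf_closed[OF F] by blast
    ultimately show "\<exists>c\<in>adjoin_filter a F. c \<le> x \<and> c \<le> y"
      by (meson inf_le1 inf_le2 inf_mono order_refl order_trans)
  next
    fix x y assume "x \<in> adjoin_filter a F" "x \<le> y"
    then show "y \<in> adjoin_filter a F"
      unfolding adjoin_filter_def using order_trans by blast
  qed
qed

lemma maximal_filter_avoiding_meets:
  fixes M D :: "'a::{lattice,order_bot} set"
  assumes "maximal_filter_avoiding (\<le>) D M" "is_ideal D" "a \<notin> M"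
  shows "\<exists>f\<in>M. inf a f \<in> D"
proof (rule ccontr)
  have M: "is_filter (\<le>) M"
    and maximal: "\<And>X. is_filter (\<le>) X \<Longrightarrow> X \<inter> D = {} \<Longrightarrow> M \<subseteq> X \<Longrightarrow> X = M"
    using assms(1) unfolding maximal_filter_avoiding_def by blast+
  assume "\<not> (\<exists>f\<in>M. inf a f \<in> D)"
  then have "adjoin_filter a M \<inter> D = {}"
    using assms(2) unfolding adjoin_filter_def is_ideal_def by blast
  then have "adjoin_filter a M = M"
    using maximal is_filter_adjoin_filter[OF M] subset_adjoin_filter[OF M] by blast
  then show False
    using mem_adjoin_filter[OF M, of a] \<open>a \<notin> M\<close> by simp
qed

lemma maximal_filter_avoiding_ideal_prime:
  fixes M D :: "'a::{distrib_lattice,order_bot} set"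
  assumes M: "maximal_filter_avoiding (\<le>) D M" and D: "is_ideal D" and "sup a c \<in> M"
  shows "a \<in> M \<or> c \<in> M"
proof (rule ccontr)
  assume "\<not> (a \<in> M \<or> c \<in> M)"
  then obtain f g where f: "f \<in> M" "inf a f \<in> D" and g: "g \<in> M" "inf c g \<in> D"
    using maximal_filter_avoiding_meets[OF M D] by metis
  have filter: "is_filter (\<le>) M" and "M \<inter> D = {}"
    using M unfolding maximal_filter_avoiding_def by blast+
  have "inf (sup a c) (inf f g) \<in> M"
    using filter_inf_closed[OF filter] \<open>sup a c \<in> M\<close> f(1) g(1) by blast
  moreover have "inf (sup a c) (inf f g) = sup (inf a (inf f g)) (inf c (inf f g))"
    by (rule inf_sup_distrib2)
  moreover have "\<dots> \<le> sup (inf a f) (inf c g)"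
    by (intro sup_mono inf_mono) simp_all
  moreover have "sup (inf a f) (inf c g) \<in> D"
    using D f(2) g(2) unfolding is_ideal_def by blast
  ultimately have "inf (sup a c) (inf f g) \<in> M \<inter> D"
    using D unfolding is_ideal_def by auto
  with \<open>M \<inter> D = {}\<close> show False
    by blast
qed

lemma ultrafilter_disjoint_member:
  fixes F :: "'a::{lattice,order_bot} set"
  assumes "is_ultrafilter (\<le>) F" "b \<notin> F"
  obtains f where "f \<in> F" "inf b f = bot"
  using maximal_filter_avoiding_meets[OF assms(1)[unfolded ultrafilter_iff_maximal_filter_avoiding_bot]
      is_ideal_bot assms(2)] by blast

lemma ultrafilter_prime:
  fixes F :: "'a::{distrib_lattice,order_bot} set"
  assumes "is_ultrafilter (\<le>) F" "sup a c \<in> F"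
  shows "a \<in> F \<or> c \<in> F"
  using maximal_filter_avoiding_ideal_prime[OF assms(1)[unfolded ultrafilter_iff_maximal_filter_avoiding_bot]
      is_ideal_bot assms(2)] .

lemma ultrafilters_distinct_imp_member:
  fixes F G :: "'a::order_bot set"
  assumes "is_ultrafilter (\<le>) F" "is_ultrafilter (\<le>) G" "F \<noteq> G"
  obtains b where "b \<in> F" "b \<notin> G"
  using assms unfolding ultrafilter_iff_maximal_bot_free by blast

lemma Hausdorff_ultrafilter_space:
  "Hausdorff_space (ultrafilter_space ((\<le>) :: 'a::{lattice,order_bot} \<Rightarrow> 'a \<Rightarrow> bool))"
  unfolding Hausdorff_space_def topspace_ultrafilter_space
proof (intro allI impI)
  fix F G :: "'a set"
  assume "F \<in> {G. is_ultrafilter (\<le>) G} \<and> G \<in> {G. is_ultrafilter (\<le>) G} \<and> F \<noteq> G"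
  then have F: "is_ultrafilter (\<le>) F" and G: "is_ultrafilter (\<le>) G" and "F \<noteq> G"
    by auto
  then obtain b where "b \<in> F" "b \<notin> G"
    by (rule ultrafilters_distinct_imp_member)
  then obtain g where "g \<in> G" "inf b g = bot"
    using ultrafilter_disjoint_member[OF G] by metis
  have "disjnt (ultrafilters_containing (\<le>) b) (ultrafilters_containing (\<le>) g)"
    unfolding disjnt_iff
  proof (intro allI notI)
    fix H assume "H \<in> ultrafilters_containing (\<le>) b \<and> H \<in> ultrafilters_containing (\<le>) g"
    then have "is_filter (\<le>) H" "bot \<notin> H" "b \<in> H" "g \<in> H"
      unfolding ultrafilters_containing_def ultrafilter_iff_maximal_bot_free by auto
    then show False
      using filter_inf_closed[of H b g] \<open>inf b g = bot\<close> by simp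
  qed
  then show "\<exists>U V. openin (ultrafilter_space (\<le>)) U \<and> openin (ultrafilter_space (\<le>)) V \<and>
      F \<in> U \<and> G \<in> V \<and> disjnt U V"
  proof (intro exI conjI)
    show "F \<in> ultrafilters_containing (\<le>) b" "G \<in> ultrafilters_containing (\<le>) g"
      using F G \<open>b \<in> F\<close> \<open>g \<in> G\<close> by (simp_all add: ultrafilters_containing_def)
  qed (simp_all add: openin_ultrafilters_containing \<open>disjnt _ _\<close>)
qed

lemma gen_boolean_algebra_relative_complement:
  fixes a b :: "'a::{distrib_lattice,order_bot}"
  assumes "gen_boolean_algebra TYPE('a)" "a \<le> b"
  obtains c where "inf a c = bot" "sup a c = b"
  using assms unfolding gen_boolean_algebra_def by blast

lemma maximal_filter_avoiding_ideal_is_ultrafilter: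
  fixes M D :: "'a::{distrib_lattice,order_bot} set"
  assumes gba: "gen_boolean_algebra TYPE('a)"
    and M: "maximal_filter_avoiding (\<le>) D M" and D: "is_ideal D"
  shows "is_ultrafilter (\<le>) M"
proof -
  have filter: "is_filter (\<le>) M" and "M \<inter> D = {}"
    using M unfolding maximal_filter_avoiding_def by blast+
  have "G \<subseteq> M" if G: "is_filter (\<le>) G" "bot \<notin> G" "M \<subseteq> G" for G
  proof
    fix a assume "a \<in> G"
    show "a \<in> M"
    proof (rule ccontr)
      assume "a \<notin> M"
      then obtain f where f: "f \<in> M" "inf a f \<in> D"
        using maximal_filter_avoiding_meets[OF M D] by blast
      obtain e where e: "inf (inf a f) e = bot" "sup (inf a f) e = f"
        using gen_boolean_algebra_relative_complement[OF gba, of "inf a f" f] by auto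
      have "sup (inf a f) e \<in> M"
        using e(2) f(1) by simp
      then have "inf a f \<in> M \<or> e \<in> M"
        by (rule maximal_filter_avoiding_ideal_prime[OF M D])
      moreover have "inf a f \<notin> M"
        using f(2) \<open>M \<inter> D = {}\<close> by blast
      ultimately have "e \<in> M"
        by blast
      then have "inf (inf a f) e \<in> G"
        using filter_inf_closed[OF G(1)] \<open>a \<in> G\<close> f(1) G(3) by blast
      with e(1) G(2) show False
        by simp
    qed
  qed
  moreover have "bot \<notin> M"
    using D \<open>M \<inter> D = {}\<close> unfolding is_ideal_def by blast
  ultimately show ?thesis
    unfolding ultrafilter_iff_maximal_bot_free using filter by blast
qed

lemma ultrafilter_avoiding_ideal:
  fixes D :: "'a::{distrib_lattice,order_bot} set"
  assumes "gen_boolean_algebra TYPE('a)" "is_ideal D" "b \<notin> D"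
  obtains F where "is_ultrafilter (\<le>) F" "b \<in> F" "F \<inter> D = {}"
proof -
  have "is_filter (\<le>) {y. b \<le> y}"
    unfolding is_filter_def by (auto intro: order_trans)
  moreover have "{y. b \<le> y} \<inter> D = {}"
    using assms(2,3) unfolding is_ideal_def by blast
  ultimately obtain M where "{y. b \<le> y} \<subseteq> M" "maximal_filter_avoiding (\<le>) D M"
    by (rule maximal_filter_avoiding_exists)
  moreover from this have "is_ultrafilter (\<le>) M"
    using maximal_filter_avoiding_ideal_is_ultrafilter[OF assms(1)] assms(2) by blast
  ultimately show thesis
    using that unfolding maximal_filter_avoiding_def by blast
qed

lemma ultrafilters_containing_bot:
  "ultrafilters_containing (\<le>) (bot :: 'a::order_bot) = {}"
  unfolding ultrafilters_containing_def ultrafilter_iff_maximal_bot_free by blast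

lemma ultrafilters_containing_sup:
  fixes a c :: "'a::{distrib_lattice,order_bot}"
  shows "ultrafilters_containing (\<le>) (sup a c) \<subseteq>
    ultrafilters_containing (\<le>) a \<union> ultrafilters_containing (\<le>) c"
  unfolding ultrafilters_containing_def using ultrafilter_prime by blast

lemma finitely_covered_is_ideal:
  "is_ideal {d :: 'a::{distrib_lattice,order_bot}. \<exists>\<V>. finite \<V> \<and> \<V> \<subseteq> \<U> \<and>
     ultrafilters_containing (\<le>) d \<subseteq> \<Union>\<V>}"
  unfolding is_ideal_def
proof (intro conjI ballI allI impI; clarsimp)
  show "\<exists>\<V>. finite \<V> \<and> \<V> \<subseteq> \<U> \<and> ultrafilters_containing (\<le>) bot \<subseteq> \<Union>\<V>"
    by (rule exI[of _ "{}"]) (simp add: ultrafilters_containing_bot)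
next
  fix d d' :: 'a and \<V> assume "d' \<le> d" "finite \<V>" "\<V> \<subseteq> \<U>"
    "ultrafilters_containing (\<le>) d \<subseteq> \<Union>\<V>"
  then show "\<exists>\<V>. finite \<V> \<and> \<V> \<subseteq> \<U> \<and> ultrafilters_containing (\<le>) d' \<subseteq> \<Union>\<V>"
    using ultrafilters_containing_mono[of "(\<le>)" d' d] by blast
next
  fix d e :: 'a and \<V> \<W> assume "finite \<V>" "\<V> \<subseteq> \<U>" "ultrafilters_containing (\<le>) d \<subseteq> \<Union>\<V>"
    "finite \<W>" "\<W> \<subseteq> \<U>" "ultrafilters_containing (\<le>) e \<subseteq> \<Union>\<W>"
  then show "\<exists>\<V>. finite \<V> \<and> \<V> \<subseteq> \<U> \<and> ultrafilters_containing (\<le>) (sup d e) \<subseteq> \<Union>\<V>"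
    using ultrafilters_containing_sup[of d e] by (intro exI[of _ "\<V> \<union> \<W>"]) auto
qed

lemma compactin_ultrafilters_containing:
  fixes b :: "'a::{distrib_lattice,order_bot}"
  assumes "gen_boolean_algebra TYPE('a)"
  shows "compactin (ultrafilter_space (\<le>)) (ultrafilters_containing (\<le>) b)"
  unfolding compactin_def
proof (intro conjI allI impI)
  show "ultrafilters_containing (\<le>) b \<subseteq> topspace (ultrafilter_space (\<le>))"
    by (auto simp: topspace_ultrafilter_space ultrafilters_containing_def)
next
  fix \<U> assume cover: "(\<forall>U\<in>\<U>. openin (ultrafilter_space (\<le>)) U) \<and>
    ultrafilters_containing (\<le>) b \<subseteq> \<Union>\<U>"
  define D where "D = {d :: 'a. \<exists>\<V>. finite \<V> \<and> \<V> \<subseteq> \<U> \<and>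
    ultrafilters_containing (\<le>) d \<subseteq> \<Union>\<V>}"
  have "b \<in> D"
  proof (rule ccontr)
    assume "b \<notin> D"
    moreover have "is_ideal D"
      unfolding D_def by (rule finitely_covered_is_ideal)
    ultimately obtain F where F: "is_ultrafilter (\<le>) F" "b \<in> F" "F \<inter> D = {}"
      using ultrafilter_avoiding_ideal[OF assms] by blast
    then obtain U where "U \<in> \<U>" "F \<in> U"
      using cover unfolding ultrafilters_containing_def by blast
    then obtain c where "F \<in> ultrafilters_containing (\<le>) c" "ultrafilters_containing (\<le>) c \<subseteq> U"
      using cover openin_ultrafilter_space_iff[of "(\<le>)" U] by blast
    moreover from this have "c \<in> D"
      unfolding D_def using \<open>U \<in> \<U>\<close> by (intro CollectI exI[of _ "{U}"]) auto
    ultimately show False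
      using F(3) unfolding ultrafilters_containing_def by blast
  qed
  then show "\<exists>\<V>. finite \<V> \<and> \<V> \<subseteq> \<U> \<and> ultrafilters_containing (\<le>) b \<subseteq> \<Union>\<V>"
    unfolding D_def by blast
qed

lemma boolean_space_ultrafilter_space:
  assumes "gen_boolean_algebra TYPE('a::{distrib_lattice,order_bot})"
  shows "boolean_space (ultrafilter_space ((\<le>) :: 'a \<Rightarrow> 'a \<Rightarrow> bool))"
  unfolding boolean_space_def
proof (intro conjI allI impI)
  show "Hausdorff_space (ultrafilter_space ((\<le>) :: 'a \<Rightarrow> 'a \<Rightarrow> bool))"
    by (rule Hausdorff_ultrafilter_space)
next
  fix U F assume "openin (ultrafilter_space ((\<le>) :: 'a \<Rightarrow> 'a \<Rightarrow> bool)) U \<and> F \<in> U"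
  then obtain c where "F \<in> ultrafilters_containing (\<le>) c" "ultrafilters_containing (\<le>) c \<subseteq> U"
    using openin_ultrafilter_space_iff[of "(\<le>)" U] by blast
  then show "\<exists>K. openin (ultrafilter_space (\<le>)) K \<and> compactin (ultrafilter_space (\<le>)) K \<and>
      F \<in> K \<and> K \<subseteq> U"
    using openin_ultrafilters_containing[of "(\<le>)" c] compactin_ultrafilters_containing[OF assms, of c]
    by blast
qed

section \<open>Local homeomorphisms\<close>

lemma local_homeomorphism_if_locally_injective_open_map:
  assumes cont: "continuous_map X Y f" and open_map: "open_map X Y f"
    and locally_injective: "\<And>x. x \<in> topspace X \<Longrightarrow> \<exists>U. openin X U \<and> x \<in> U \<and> inj_on f U"
  shows "local_homeomorphism X Y f"
  unfolding local_homeomorphism_def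
proof (intro conjI ballI cont)
  fix x assume "x \<in> topspace X"
  then obtain U where U: "openin X U" "x \<in> U" "inj_on f U"
    using locally_injective by blast
  have fU: "openin Y (f ` U)"
    using open_map U(1) unfolding open_map_def by blast
  have "homeomorphic_map (subtopology X U) (subtopology Y (f ` U)) f"
  proof (rule bijective_open_imp_homeomorphic_map)
    show "continuous_map (subtopology X U) (subtopology Y (f ` U)) f"
      by (rule continuous_map_into_subtopology[OF continuous_map_from_subtopology[OF cont]]) auto
    show "open_map (subtopology X U) (subtopology Y (f ` U)) f"
      by (rule open_map_into_subtopology[OF open_map_from_subtopology[OF open_map U(1)]]) auto
    show "f ` topspace (subtopology X U) = topspace (subtopology Y (f ` U))"
      using openin_subset[OF U(1)] openin_subset[OF fU] by (auto simp: Int_absorb1)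
    show "inj_on f (topspace (subtopology X U))"
      using U(3) by (simp add: inj_on_subset)
  qed
  with U fU show "\<exists>U. openin X U \<and> x \<in> U \<and> openin Y (f ` U) \<and>
      homeomorphic_map (subtopology X U) (subtopology Y (f ` U)) f"
    by blast
qed

section \<open>Ultrafilters of a Boolean set\<close>

locale boolean_presheaf =
  fixes p :: "'x \<Rightarrow> 'b::{distrib_lattice,order_bot}" and r :: "'x \<Rightarrow> 'b \<Rightarrow> 'x"
  assumes boolean_set: "boolean_set p r"
begin

abbreviation le_X :: "'x \<Rightarrow> 'x \<Rightarrow> bool" where
  "le_X \<equiv> pre_le p r"

lemma gen_boolean_algebra: "gen_boolean_algebra TYPE('b)"
  using boolean_set unfolding boolean_set_def by simp

lemma proj_restrict: "f \<le> p x \<Longrightarrow> p (r x f) = f"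
  using boolean_set unfolding boolean_set_def presheaf_def by simp

lemma restrict_proj [simp]: "r x (p x) = x"
  using boolean_set unfolding boolean_set_def presheaf_def by simp

lemma restrict_restrict: "g \<le> f \<Longrightarrow> f \<le> p x \<Longrightarrow> r (r x f) g = r x g"
  using boolean_set unfolding boolean_set_def presheaf_def by simp

lemma proj_surj: "\<exists>x. p x = e"
  using boolean_set unfolding boolean_set_def global_support_def by simp

lemma compatible_imp_join: "compatible p r x y \<Longrightarrow> \<exists>j. is_join_of le_X x y j"
  using boolean_set unfolding boolean_set_def by simp

lemma le_X_if_proj_bot: "p x = bot \<Longrightarrow> le_X x y"
  using boolean_set unfolding boolean_set_def is_least_def by simp

lemma le_X_refl: "le_X x x"
  by (simp add: pre_le_def)

lemma le_X_proj: "le_X x y \<Longrightarrow> p x \<le> p y"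
  by (simp add: pre_le_def)

lemma le_X_eq_restrict: "le_X x y \<Longrightarrow> x = r y (p x)"
  by (simp add: pre_le_def)

lemma le_X_trans: "le_X x y \<Longrightarrow> le_X y z \<Longrightarrow> le_X x z"
  unfolding pre_le_def by (metis order_trans restrict_restrict)

lemma restrict_le_X_mono: "f \<le> g \<Longrightarrow> g \<le> p x \<Longrightarrow> le_X (r x f) (r x g)"
  unfolding pre_le_def by (simp add: proj_restrict restrict_restrict order_trans)

lemma compatible_if_proj_disjoint:
  assumes "inf (p a) (p y) = bot"
  shows "compatible p r a y"
proof -
  let ?z = "r a bot"
  have "p ?z = bot"
    by (simp add: proj_restrict)
  moreover have "is_meet_of le_X a y ?z"
    unfolding is_meet_of_def
  proof (intro conjI allI impI)
    show "le_X ?z a" "le_X ?z y"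
      using le_X_if_proj_bot[OF \<open>p ?z = bot\<close>] by auto
  next
    fix w assume "le_X w a \<and> le_X w y"
    then have "p w \<le> inf (p a) (p y)"
      using le_X_proj by auto
    then have "p w = bot"
      using assms by (simp add: bot_unique)
    then show "le_X w ?z"
      by (rule le_X_if_proj_bot)
  qed
  ultimately show ?thesis
    unfolding compatible_def using assms by auto
qed

text \<open>Join a with a section over a relative complement of p a in b, then restrict the join to b.\<close>
lemma extension_exists:
  assumes "p a \<le> b"
  obtains j where "le_X a j" "p j = b"
proof -
  obtain c where c: "inf (p a) c = bot" "sup (p a) c = b"
    using gen_boolean_algebra_relative_complement[OF gen_boolean_algebra assms] by blast
  obtain y where "p y = c"
    using proj_surj by blast
  with c have "compatible p r a y"
    by (simp add: compatible_if_proj_disjoint)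
  then obtain j where "is_join_of le_X a y j"
    using compatible_imp_join by blast
  then have aj: "le_X a j" and yj: "le_X y j"
    and least: "\<And>w. le_X a w \<Longrightarrow> le_X y w \<Longrightarrow> le_X j w"
    unfolding is_join_of_def by auto
  have "b \<le> p j"
    using le_X_proj[OF aj] le_X_proj[OF yj] c(2) \<open>p y = c\<close> by auto
  have "le_X a (r j b)" "le_X y (r j b)"
    using restrict_le_X_mono[OF _ \<open>b \<le> p j\<close>, of "p a"]
      restrict_le_X_mono[OF _ \<open>b \<le> p j\<close>, of "p y"]
      le_X_eq_restrict[OF aj] le_X_eq_restrict[OF yj] c(2) \<open>p y = c\<close> assms by auto
  then have "p j \<le> b"
    using le_X_proj[OF least] proj_restrict[OF \<open>b \<le> p j\<close>] by metis
  with aj \<open>b \<le> p j\<close> show thesis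
    using that by simp
qed

lemma filter_image_proj:
  assumes G: "is_filter le_X G"
  shows "is_filter (\<le>) (p ` G)"
  unfolding is_filter_def
proof (intro conjI ballI allI impI)
  show "p ` G \<noteq> {}"
    using G unfolding is_filter_def by simp
next
  fix a b assume "a \<in> p ` G" "b \<in> p ` G"
  then obtain x y where "x \<in> G" "y \<in> G" "a = p x" "b = p y"
    by blast
  then obtain z where "z \<in> G" "le_X z x" "le_X z y"
    using filter_directed[OF G] by blast
  then show "\<exists>c\<in>p ` G. c \<le> a \<and> c \<le> b"
    using le_X_proj \<open>a = p x\<close> \<open>b = p y\<close> by blast
next
  fix a b assume "a \<in> p ` G" "a \<le> b"
  then obtain x where "x \<in> G" "a = p x"
    by blast
  with \<open>a \<le> b\<close> obtain j where "le_X x j" "p j = b"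
    using extension_exists[of x b] by blast
  then show "b \<in> p ` G"
    using filter_upclosed[OF G \<open>x \<in> G\<close>] by blast
qed

lemma bot_notin_image_proj:
  assumes "is_filter le_X G" "G \<noteq> UNIV"
  shows "bot \<notin> p ` G"
proof
  assume "bot \<in> p ` G"
  then obtain x where "x \<in> G" "p x = bot"
    by force
  then have "y \<in> G" for y
    using filter_upclosed[OF assms(1) \<open>x \<in> G\<close>] le_X_if_proj_bot by blast
  with assms(2) show False
    by blast
qed

definition lift :: "'x \<Rightarrow> 'b set \<Rightarrow> 'x set" where
  "lift x F = {y. \<exists>f\<in>F. f \<le> p x \<and> le_X (r x f) y}"

lemma mem_lift_self: "p x \<in> F \<Longrightarrow> x \<in> lift x F"
  unfolding lift_def using le_X_refl by force

lemma lift_mono: "F \<subseteq> F' \<Longrightarrow> lift x F \<subseteq> lift x F'"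
  unfolding lift_def by blast

lemma filter_lift:
  assumes F: "is_filter (\<le>) F" "p x \<in> F"
  shows "is_filter le_X (lift x F)"
  unfolding is_filter_def
proof (intro conjI ballI allI impI)
  show "lift x F \<noteq> {}"
    using mem_lift_self[OF F(2)] by blast
next
  fix a b assume "a \<in> lift x F" "b \<in> lift x F"
  then obtain f g where f: "f \<in> F" "f \<le> p x" "le_X (r x f) a"
    and g: "g \<in> F" "g \<le> p x" "le_X (r x g) b"
    unfolding lift_def by blast
  have "inf f g \<in> F"
    using filter_inf_closed[OF F(1) f(1) g(1)] .
  then have "r x (inf f g) \<in> lift x F"
    unfolding lift_def using f(2) le_X_refl by (auto intro: le_infI1)
  moreover have "le_X (r x (inf f g)) a"
    using le_X_trans[OF restrict_le_X_mono[OF inf_le1 f(2)] f(3)] .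
  moreover have "le_X (r x (inf f g)) b"
    using le_X_trans[OF restrict_le_X_mono[OF inf_le2 g(2)] g(3)] .
  ultimately show "\<exists>c\<in>lift x F. le_X c a \<and> le_X c b"
    by blast
next
  fix a b assume "a \<in> lift x F" "le_X a b"
  then show "b \<in> lift x F"
    unfolding lift_def using le_X_trans by blast
qed

lemma lift_ne_UNIV:
  assumes "bot \<notin> F"
  shows "lift x F \<noteq> UNIV"
proof
  assume "lift x F = UNIV"
  then obtain f where "f \<in> F" "f \<le> p x" "le_X (r x f) (r x bot)"
    unfolding lift_def by blast
  then have "f \<le> bot"
    using le_X_proj proj_restrict by fastforce
  with \<open>f \<in> F\<close> assms show False
    by (simp add: bot_unique)
qed

lemma image_proj_lift:
  assumes F: "is_filter (\<le>) F" "p x \<in> F"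
  shows "p ` lift x F = F"
proof
  show "p ` lift x F \<subseteq> F"
  proof
    fix b assume "b \<in> p ` lift x F"
    then obtain y f where "b = p y" "f \<in> F" "f \<le> p x" "le_X (r x f) y"
      unfolding lift_def by blast
    then have "f \<le> b"
      using le_X_proj proj_restrict by fastforce
    then show "b \<in> F"
      using filter_upclosed[OF F(1) \<open>f \<in> F\<close>] by blast
  qed
next
  show "F \<subseteq> p ` lift x F"
  proof
    fix b assume "b \<in> F"
    let ?g = "inf b (p x)"
    have "?g \<in> F"
      using filter_inf_closed[OF F(1) \<open>b \<in> F\<close> F(2)] .
    then have "r x ?g \<in> lift x F"
      unfolding lift_def using le_X_refl[of "r x ?g"] by (intro CollectI bexI[of _ ?g]) auto
    moreover obtain j where "le_X (r x ?g) j" "p j = b"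
      using extension_exists[of "r x ?g" b] proj_restrict[of ?g x] by auto
    ultimately show "b \<in> p ` lift x F"
      using filter_upclosed[OF filter_lift[OF F]] by blast
  qed
qed

lemma lift_image_proj:
  assumes G: "is_filter le_X G" and "x \<in> G"
  shows "lift x (p ` G) = G"
proof
  show "G \<subseteq> lift x (p ` G)"
  proof
    fix y assume "y \<in> G"
    then obtain c where "c \<in> G" "le_X c x" "le_X c y"
      using filter_directed[OF G \<open>x \<in> G\<close>] by blast
    then show "y \<in> lift x (p ` G)"
      unfolding lift_def using le_X_proj le_X_eq_restrict by force
  qed
next
  show "lift x (p ` G) \<subseteq> G"
  proof
    fix y assume "y \<in> lift x (p ` G)"
    then obtain g where g: "g \<in> G" "p g \<le> p x" "le_X (r x (p g)) y"
      unfolding lift_def by blast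
    obtain c where c: "c \<in> G" "le_X c x" "le_X c g"
      using filter_directed[OF G \<open>x \<in> G\<close> g(1)] by blast
    have "le_X (r x (p c)) (r x (p g))"
      using restrict_le_X_mono le_X_proj[OF c(3)] g(2) by blast
    then have "le_X c y"
      using le_X_trans[OF _ g(3)] le_X_eq_restrict[OF c(2)] by simp
    then show "y \<in> G"
      using filter_upclosed[OF G c(1)] by blast
  qed
qed

lemma ultrafilter_image_proj:
  assumes G: "is_ultrafilter le_X G"
  shows "is_ultrafilter (\<le>) (p ` G)"
proof -
  have filter: "is_filter le_X G" and "G \<noteq> UNIV"
    and maximal: "\<And>G'. is_filter le_X G' \<Longrightarrow> G' \<noteq> UNIV \<Longrightarrow> G \<subseteq> G' \<Longrightarrow> G' = G"
    using G unfolding is_ultrafilter_def by blast+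
  obtain x where "x \<in> G"
    using filter_nonempty[OF filter] by blast
  have "F = p ` G" if F: "is_filter (\<le>) F" "bot \<notin> F" "p ` G \<subseteq> F" for F
  proof -
    have "p x \<in> F"
      using \<open>x \<in> G\<close> F(3) by blast
    have "G \<subseteq> lift x F"
      using lift_mono[OF F(3), of x] lift_image_proj[OF filter \<open>x \<in> G\<close>] by simp
    then have "lift x F = G"
      using maximal filter_lift[OF F(1) \<open>p x \<in> F\<close>] lift_ne_UNIV[OF F(2)] by blast
    then show ?thesis
      using image_proj_lift[OF F(1) \<open>p x \<in> F\<close>] by simp
  qed
  then show ?thesis
    unfolding ultrafilter_iff_maximal_bot_free
    using filter_image_proj[OF filter] bot_notin_image_proj[OF filter \<open>G \<noteq> UNIV\<close>] by blast
qed

lemma ultrafilter_lift: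
  assumes F: "is_ultrafilter (\<le>) F" "p x \<in> F"
  shows "is_ultrafilter le_X (lift x F)"
proof -
  have filter: "is_filter (\<le>) F" "bot \<notin> F"
    and maximal: "\<And>F'. is_filter (\<le>) F' \<Longrightarrow> bot \<notin> F' \<Longrightarrow> F \<subseteq> F' \<Longrightarrow> F' = F"
    using F(1) unfolding ultrafilter_iff_maximal_bot_free by blast+
  have "G = lift x F" if G: "is_filter le_X G" "G \<noteq> UNIV" "lift x F \<subseteq> G" for G
  proof -
    have "x \<in> G"
      using mem_lift_self[OF F(2)] G(3) by blast
    have "F \<subseteq> p ` G"
      using image_mono[OF G(3), of p] image_proj_lift[OF filter(1) F(2)] by simp
    then have "p ` G = F"
      using maximal filter_image_proj[OF G(1)] bot_notin_image_proj[OF G(1,2)] by blast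
    then show ?thesis
      using lift_image_proj[OF G(1) \<open>x \<in> G\<close>] by simp
  qed
  then show ?thesis
    unfolding is_ultrafilter_def
    using filter_lift[OF filter(1) F(2)] lift_ne_UNIV[OF filter(2)] by blast
qed

lemma image_proj_ultrafilters_containing:
  "(\<lambda>G. p ` G) ` ultrafilters_containing le_X x = ultrafilters_containing (\<le>) (p x)"
proof
  show "(\<lambda>G. p ` G) ` ultrafilters_containing le_X x \<subseteq> ultrafilters_containing (\<le>) (p x)"
    using ultrafilter_image_proj by (auto simp: ultrafilters_containing_def)
next
  show "ultrafilters_containing (\<le>) (p x) \<subseteq> (\<lambda>G. p ` G) ` ultrafilters_containing le_X x"
  proof
    fix F assume "F \<in> ultrafilters_containing (\<le>) (p x)"
    then have F: "is_ultrafilter (\<le>) F" "p x \<in> F"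
      by (auto simp: ultrafilters_containing_def)
    then have "lift x F \<in> ultrafilters_containing le_X x"
      using ultrafilter_lift mem_lift_self by (simp add: ultrafilters_containing_def)
    moreover have "F = p ` lift x F"
      using image_proj_lift[OF ultrafilter_imp_filter[OF F(1)] F(2)] by simp
    ultimately show "F \<in> (\<lambda>G. p ` G) ` ultrafilters_containing le_X x"
      by blast
  qed
qed

lemma inj_on_image_proj_ultrafilters_containing:
  "inj_on (\<lambda>G. p ` G) (ultrafilters_containing le_X x)"
proof (rule inj_onI)
  fix G H assume "G \<in> ultrafilters_containing le_X x" "H \<in> ultrafilters_containing le_X x"
    and "p ` G = p ` H"
  then have "is_filter le_X G" "x \<in> G" "is_filter le_X H" "x \<in> H"
    by (simp_all add: ultrafilters_containing_def ultrafilter_imp_filter)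
  then have "G = lift x (p ` G)" "H = lift x (p ` H)"
    by (simp_all add: lift_image_proj)
  with \<open>p ` G = p ` H\<close> show "G = H"
    by simp
qed

lemma image_proj_ultrafilter_space:
  "(\<lambda>G. p ` G) ` topspace (ultrafilter_space le_X) = topspace (ultrafilter_space (\<le>))"
proof
  show "(\<lambda>G. p ` G) ` topspace (ultrafilter_space le_X) \<subseteq> topspace (ultrafilter_space (\<le>))"
    using ultrafilter_image_proj by (auto simp: topspace_ultrafilter_space)
next
  show "topspace (ultrafilter_space (\<le>)) \<subseteq> (\<lambda>G. p ` G) ` topspace (ultrafilter_space le_X)"
  proof
    fix F :: "'b set" assume "F \<in> topspace (ultrafilter_space (\<le>))"
    then have F: "is_ultrafilter (\<le>) F"
      by (simp add: topspace_ultrafilter_space)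
    then obtain b where "b \<in> F"
      using filter_nonempty[OF ultrafilter_imp_filter[OF F]] by blast
    moreover obtain x where "p x = b"
      using proj_surj by blast
    ultimately have "F \<in> (\<lambda>G. p ` G) ` ultrafilters_containing le_X x"
      unfolding image_proj_ultrafilters_containing using F by (simp add: ultrafilters_containing_def)
    then show "F \<in> (\<lambda>G. p ` G) ` topspace (ultrafilter_space le_X)"
      using openin_subset[OF openin_ultrafilters_containing[of le_X x]] by blast
  qed
qed

lemma continuous_map_image_proj:
  "continuous_map (ultrafilter_space le_X) (ultrafilter_space (\<le>)) (\<lambda>G. p ` G)"
  unfolding continuous_map_def
proof (intro conjI allI impI)
  show "(\<lambda>G. p ` G) \<in> topspace (ultrafilter_space le_X) \<rightarrow> topspace (ultrafilter_space (\<le>))"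
    using image_proj_ultrafilter_space by blast
next
  fix U :: "'b set set" assume U: "openin (ultrafilter_space (\<le>)) U"
  show "openin (ultrafilter_space le_X) {G \<in> topspace (ultrafilter_space le_X). p ` G \<in> U}"
    unfolding openin_ultrafilter_space_iff
  proof
    fix G assume "G \<in> {G \<in> topspace (ultrafilter_space le_X). p ` G \<in> U}"
    then have G: "is_ultrafilter le_X G" "p ` G \<in> U"
      by (auto simp: topspace_ultrafilter_space)
    then obtain b where "p ` G \<in> ultrafilters_containing (\<le>) b" "ultrafilters_containing (\<le>) b \<subseteq> U"
      using U unfolding openin_ultrafilter_space_iff by blast
    then obtain x where "x \<in> G" "ultrafilters_containing (\<le>) (p x) \<subseteq> U"
      unfolding ultrafilters_containing_def by blast
    moreover have "ultrafilters_containing le_X x \<subseteq> topspace (ultrafilter_space le_X)"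
      using openin_subset[OF openin_ultrafilters_containing[of le_X x]] .
    ultimately have "ultrafilters_containing le_X x \<subseteq> {G \<in> topspace (ultrafilter_space le_X). p ` G \<in> U}"
      using image_proj_ultrafilters_containing[of x] by blast
    moreover have "G \<in> ultrafilters_containing le_X x"
      using G(1) \<open>x \<in> G\<close> by (simp add: ultrafilters_containing_def)
    ultimately show "\<exists>a. G \<in> ultrafilters_containing le_X a \<and>
        ultrafilters_containing le_X a \<subseteq> {G \<in> topspace (ultrafilter_space le_X). p ` G \<in> U}"
      by blast
  qed
qed

lemma open_map_image_proj:
  "open_map (ultrafilter_space le_X) (ultrafilter_space (\<le>)) (\<lambda>G. p ` G)"
  unfolding open_map_def
proof (intro allI impI)
  fix V assume V: "openin (ultrafilter_space le_X) V"
  show "openin (ultrafilter_space (\<le>)) ((\<lambda>G. p ` G) ` V)"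
    unfolding openin_ultrafilter_space_iff
  proof
    fix F assume "F \<in> (\<lambda>G. p ` G) ` V"
    then obtain G where "G \<in> V" "F = p ` G"
      by blast
    then obtain x where x: "G \<in> ultrafilters_containing le_X x" "ultrafilters_containing le_X x \<subseteq> V"
      using V unfolding openin_ultrafilter_space_iff by blast
    have "F \<in> ultrafilters_containing (\<le>) (p x)"
      using x(1) \<open>F = p ` G\<close> unfolding image_proj_ultrafilters_containing[symmetric] by blast
    moreover have "ultrafilters_containing (\<le>) (p x) \<subseteq> (\<lambda>G. p ` G) ` V"
      using image_mono[OF x(2), of "\<lambda>G. p ` G"] unfolding image_proj_ultrafilters_containing .
    ultimately show "\<exists>b. F \<in> ultrafilters_containing (\<le>) b \<and>
        ultrafilters_containing (\<le>) b \<subseteq> (\<lambda>G. p ` G) ` V"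
      by blast
  qed
qed

lemma etale_space_image_proj:
  "etale_space (ultrafilter_space le_X) (\<lambda>G. p ` G) (ultrafilter_space (\<le>))"
  unfolding etale_space_def
proof (intro conjI image_proj_ultrafilter_space
    local_homeomorphism_if_locally_injective_open_map continuous_map_image_proj open_map_image_proj)
  fix G assume "G \<in> topspace (ultrafilter_space le_X)"
  then have G: "is_ultrafilter le_X G"
    by (simp add: topspace_ultrafilter_space)
  then obtain x where "x \<in> G"
    using filter_nonempty[OF ultrafilter_imp_filter[OF G]] by blast
  with G show "\<exists>U. openin (ultrafilter_space le_X) U \<and> G \<in> U \<and> inj_on (\<lambda>G. p ` G) U"
    using openin_ultrafilters_containing inj_on_image_proj_ultrafilters_containing
    by (intro exI[of _ "ultrafilters_containing le_X x"]) (simp add: ultrafilters_containing_def)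
qed

end

theorem proposition3p9:
  fixes p :: "'x \<Rightarrow> 'b::{distrib_lattice,order_bot}"
    and r :: "'x \<Rightarrow> 'b \<Rightarrow> 'x"
  assumes "boolean_set p r"
  shows "(\<forall>G. is_ultrafilter (pre_le p r) G \<longrightarrow> is_ultrafilter (\<le>) (p ` G))
       \<and> etale_space (ultrafilter_space (pre_le p r)) (\<lambda>G. p ` G)
                     (ultrafilter_space ((\<le>) :: 'b \<Rightarrow> 'b \<Rightarrow> bool))
       \<and> boolean_space (ultrafilter_space ((\<le>) :: 'b \<Rightarrow> 'b \<Rightarrow> bool))"
proof -
  interpret boolean_presheaf p r
    using assms by unfold_locales
  show ?thesis
    using ultrafilter_image_proj etale_space_image_proj
      boolean_space_ultrafilter_space[OF gen_boolean_algebra] by blast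
qed

end
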